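(* Let $\mathbb{X}$ be a set, $f:\mathbb{X}\to\mathbb{X}$ a bijection, $h:\mathbb{X}\to\mathbb{R}$ bounded with $\upsilon_h=\sup_{x\in\mathbb{X}}|h(x)|$, $m\ge1$ and $\ell>m$ integers, and $\beta\in(0,1)$. For $x\in\mathbb{X}$ and $k\in\{0,\dots,m-1\}$ let $$\zeta_k(x)=\sum_{t=0}^\infty\binom{k+t}{k}\beta^t(1-\beta)^{k+1}h\big(f^{-(k+t+1)}(x)\big),\qquad \tilde z_k(x)=\sum_{t=0}^{\ell-m}\binom{k+t}{k}\beta^t(1-\beta)^{k+1}h\big(f^{-(k+t+1)}(x)\big),$$ and $\zeta(x)=(\zeta_0(x),\dots,\zeta_{m-1}(x))$, $\tilde z(x)=(\tilde z_0(x),\dots,\tilde z_{m-1}(x))$. Suppose $\tilde\beta=\beta\big(1+\frac{m-1}{\ell-m}\big)<1$, i.e., $\ell>m+\frac{m-1}{\beta^{-1}-1}$. Then for every $x\in\mathbb{X}$, $$\|\tilde z(x)-\zeta(x)\|\le\binom{\ell-1}{m-1}\sqrt m\,\upsilon_h\,\frac{1-\beta}{1-\tilde\beta}\,\tilde\beta\,\beta^{\ell-m}.$$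
   Context: $\|\cdot\|$ is the Euclidean norm on $\mathbb{R}^m$; $f^{-j}$ is the $j$-fold composition of $f^{-1}$. In the paper, $\tilde z(x^{(i)})$ is computed from a backward orbit $x^{(i)},f^{-1}(x^{(i)}),\dots,f^{-\ell}(x^{(i)})$ of a sample point. *)

theory Defs
  imports "HOL-Analysis.Analysis"
begin

definition finv_pow :: "('a \<Rightarrow> 'a) \<Rightarrow> nat \<Rightarrow> 'a \<Rightarrow> 'a" where
  "finv_pow f j = (inv f) ^^ j"

definition zeta_k :: "('a \<Rightarrow> 'a) \<Rightarrow> ('a \<Rightarrow> real) \<Rightarrow> real \<Rightarrow> nat \<Rightarrow> 'a \<Rightarrow> real" where
  "zeta_k f h \<beta> k x =
     (\<Sum>t. real ((k + t) choose k) * \<beta> ^ t * (1 - \<beta>) ^ (k + 1) * h (finv_pow f (k + t + 1) x))"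

definition ztilde_k :: "('a \<Rightarrow> 'a) \<Rightarrow> ('a \<Rightarrow> real) \<Rightarrow> real \<Rightarrow> nat \<Rightarrow> nat \<Rightarrow> nat \<Rightarrow> 'a \<Rightarrow> real" where
  "ztilde_k f h \<beta> m L k x =
     (\<Sum>t=0..L - m. real ((k + t) choose k) * \<beta> ^ t * (1 - \<beta>) ^ (k + 1) * h (finv_pow f (k + t + 1) x))"

end

theory Submission imports Defs begin

text \<open>
  With \<open>w\<^sub>k(t) = C(k+t, k) \<beta>\<^sup>t\<close>, the component \<open>\<zeta>\<^sub>k(x)\<close> is the series
  \<open>\<Sum>\<^sub>t w\<^sub>k(t) (1-\<beta>)\<^bsup>k+1\<^esup> h(f\<^bsup>-(k+t+1)\<^esup> x)\<close> and the approximation is its partial sum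
  up to \<open>t = L - m\<close>. For \<open>t \<ge> L - m\<close> the ratio \<open>w\<^sub>k(t+1) / w\<^sub>k(t) = \<beta> (1 + k/(t+1))\<close> is at most
  \<open>\<beta>' = \<beta> (1 + (m-1)/(L-m)) < 1\<close>, so the remaining tail is dominated by a geometric series
  with first term \<open>\<beta>' w\<^sub>k(L-m) \<le> \<beta>' C(L-1, m-1) \<beta>\<^bsup>L-m\<^esup>\<close>. This bounds all \<open>m\<close> components
  by one constant, and the Euclidean norm by \<open>\<surd>m\<close> times it.
\<close>

definition negbin_weight :: "nat \<Rightarrow> real \<Rightarrow> nat \<Rightarrow> real" where
  "negbin_weight k \<beta> t = real ((k + t) choose k) * \<beta> ^ t"

lemma Suc_times_choose_add_Suc:
  "Suc s * ((k + Suc s) choose k) = Suc (k + s) * ((k + s) choose k)"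
proof -
  have "Suc (k + s) * ((k + s) choose k) = Suc (k + s) * ((k + s) choose s)"
    using binomial_symmetric[of k "k + s"] by simp
  also have "\<dots> = (Suc (k + s) choose Suc s) * Suc s"
    by (rule Suc_times_binomial_eq)
  also have "Suc (k + s) choose Suc s = (k + Suc s) choose k"
    using binomial_symmetric[of k "k + Suc s"] by simp
  finally show ?thesis by simp
qed

lemma choose_add_left_mono:
  assumes "k \<le> K"
  shows "(k + n) choose k \<le> (K + n) choose K"
proof -
  have "(k + n) choose k = (k + n) choose n"
    using binomial_symmetric[of k "k + n"] by simp
  also have "\<dots> \<le> (K + n) choose n"
    using assms by (intro binomial_right_mono) simp
  also have "\<dots> = (K + n) choose K"
    using binomial_symmetric[of K "K + n"] by simp
  finally show ?thesis .
qed

lemma negbin_weight_Suc: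
  "negbin_weight k \<beta> (Suc s) = \<beta> * (1 + real k / real (Suc s)) * negbin_weight k \<beta> s"
proof -
  have "real (Suc s) * real ((k + Suc s) choose k) = real (Suc (k + s)) * real ((k + s) choose k)"
    using arg_cong[OF Suc_times_choose_add_Suc, of real] by (simp only: of_nat_mult)
  then have "real ((k + Suc s) choose k) = (1 + real k / real (Suc s)) * real ((k + s) choose k)"
    by (simp add: field_simps)
  then show ?thesis
    unfolding negbin_weight_def by simp
qed

lemma negbin_weight_Suc_le:
  assumes "0 \<le> \<beta>" and "k \<le> K" and "0 < n" and "n \<le> s"
  shows "negbin_weight k \<beta> (Suc s) \<le> \<beta> * (1 + real K / real n) * negbin_weight k \<beta> s"
proof -
  have "real k / real (Suc s) \<le> real K / real n"
    using assms by (intro frac_le) auto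
  moreover have "0 \<le> negbin_weight k \<beta> s"
    using assms(1) unfolding negbin_weight_def by simp
  ultimately show ?thesis
    unfolding negbin_weight_Suc using assms(1)
    by (intro mult_right_mono mult_left_mono) auto
qed

lemma le_power_mult_if_ratio_le:
  fixes a :: "nat \<Rightarrow> real"
  assumes "0 \<le> q" and "\<And>s. n \<le> s \<Longrightarrow> a (Suc s) \<le> q * a s"
  shows "a (n + j) \<le> q ^ j * a n"
proof (induction j)
  case 0
  show ?case by simp
next
  case (Suc j)
  have "a (n + Suc j) \<le> q * a (n + j)"
    using assms(2)[of "n + j"] by simp
  also have "\<dots> \<le> q * (q ^ j * a n)"
    using Suc.IH assms(1) by (rule mult_left_mono)
  finally show ?case by simp
qed

lemma suminf_tail_le_geometric:
  fixes g :: "nat \<Rightarrow> real"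
  assumes g_le: "\<And>j. \<bar>g (j + n)\<bar> \<le> c * q ^ j" and "0 \<le> q" and "q < 1"
  shows "\<bar>suminf g - (\<Sum>i<n. g i)\<bar> \<le> c / (1 - q)"
proof -
  have geom: "summable (\<lambda>j. c * q ^ j)"
    using assms(2,3) by (intro summable_mult summable_geometric) simp
  have abs_tail: "summable (\<lambda>j. \<bar>g (j + n)\<bar>)"
    using g_le by (intro summable_comparison_test[OF _ geom]) simp
  then have "summable (\<lambda>j. g (j + n))"
    by (rule summable_rabs_cancel)
  then have "summable g"
    by simp
  then have "suminf g - (\<Sum>i<n. g i) = (\<Sum>j. g (j + n))"
    using suminf_split_initial_segment[of g n] by linarith
  also have "\<bar>\<dots>\<bar> \<le> (\<Sum>j. \<bar>g (j + n)\<bar>)"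
    using abs_tail by (rule summable_rabs)
  also have "\<dots> \<le> (\<Sum>j. c * q ^ j)"
    using g_le abs_tail geom by (rule suminf_le)
  also have "\<dots> = c / (1 - q)"
    using assms(2,3) by (simp add: suminf_mult suminf_geometric)
  finally show ?thesis .
qed

lemma L2_set_le_sqrt_card_mult:
  assumes "\<And>i. i \<in> A \<Longrightarrow> \<bar>f i\<bar> \<le> C"
  shows "L2_set f A \<le> sqrt (real (card A)) * C"
proof (cases "A = {}")
  case False
  then have "0 \<le> C"
    using assms by (meson abs_ge_zero ex_in_conv order_trans)
  have "L2_set f A = L2_set (\<lambda>i. \<bar>f i\<bar>) A"
    unfolding L2_set_def by simp
  also have "\<dots> \<le> L2_set (\<lambda>i. C) A"
    using assms by (intro L2_set_mono) auto
  also have "\<dots> = sqrt (real (card A)) * C"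
    using \<open>0 \<le> C\<close> by (simp add: L2_set_constant)
  finally show ?thesis .
qed simp

lemma negbin_weight_geometric_decay:
  assumes "0 \<le> \<beta>" and "k \<le> K" and "0 < n" and q_ge: "\<beta> * (1 + real K / real n) \<le> q"
  shows "negbin_weight k \<beta> (n + j) \<le> q ^ j * negbin_weight k \<beta> n"
proof (rule le_power_mult_if_ratio_le)
  show "0 \<le> q"
  proof -
    have "0 \<le> \<beta> * (1 + real K / real n)"
      using \<open>0 \<le> \<beta>\<close> by simp
    with q_ge show ?thesis
      by linarith
  qed
  fix s assume "n \<le> s"
  with assms have "negbin_weight k \<beta> (Suc s) \<le> \<beta> * (1 + real K / real n) * negbin_weight k \<beta> s"
    by (intro negbin_weight_Suc_le) auto
  also have "\<dots> \<le> q * negbin_weight k \<beta> s"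
    using q_ge \<open>0 \<le> \<beta>\<close> unfolding negbin_weight_def by (intro mult_right_mono) auto
  finally show "negbin_weight k \<beta> (Suc s) \<le> q * negbin_weight k \<beta> s" .
qed

lemma negbin_weight_le_choose:
  assumes "0 \<le> \<beta>" and "k \<le> K"
  shows "negbin_weight k \<beta> n \<le> real ((K + n) choose K) * \<beta> ^ n"
  using choose_add_left_mono[OF \<open>k \<le> K\<close>, of n] \<open>0 \<le> \<beta>\<close>
  unfolding negbin_weight_def by (intro mult_right_mono) auto

lemma negbin_term_tail_le:
  assumes "\<bar>y\<bar> \<le> u" and "0 \<le> \<beta>" and "\<beta> < 1"
    and "k \<le> K" and "0 < n" and "\<beta> * (1 + real K / real n) \<le> q"
  shows "\<bar>negbin_weight k \<beta> (n + j) * (1 - \<beta>) ^ (k + 1) * y\<bar>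
    \<le> q ^ j * negbin_weight k \<beta> n * (1 - \<beta>) ^ (k + 1) * u"
proof -
  have coeff_nonneg: "0 \<le> negbin_weight k \<beta> (n + j) * (1 - \<beta>) ^ (k + 1)"
    using assms(2,3) unfolding negbin_weight_def by simp
  have "\<bar>negbin_weight k \<beta> (n + j) * (1 - \<beta>) ^ (k + 1) * y\<bar>
      \<le> negbin_weight k \<beta> (n + j) * (1 - \<beta>) ^ (k + 1) * u"
    unfolding abs_mult[of _ y] abs_of_nonneg[OF coeff_nonneg]
    by (rule mult_left_mono[OF assms(1) coeff_nonneg])
  also have "\<dots> \<le> q ^ j * negbin_weight k \<beta> n * (1 - \<beta>) ^ (k + 1) * u"
    using negbin_weight_geometric_decay[OF assms(2,4-6)] assms(1,3)
    by (intro mult_right_mono) auto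
  finally show ?thesis .
qed

lemma ztilde_k_minus_zeta_k_bound:
  assumes h_le: "\<And>y. \<bar>h y\<bar> \<le> u"
    and "k < m" and "m < L" and "0 \<le> \<beta>" and "\<beta> < 1"
    and q_ge: "\<beta> * (1 + real (m - 1) / real (L - m)) \<le> q" and "q < 1"
  shows "\<bar>ztilde_k f h \<beta> m L k x - zeta_k f h \<beta> k x\<bar>
     \<le> real ((L - 1) choose (m - 1)) * u * ((1 - \<beta>) / (1 - q)) * q * \<beta> ^ (L - m)"
proof -
  define n where "n = L - m"
  define g where "g t = negbin_weight k \<beta> t * (1 - \<beta>) ^ (k + 1) * h (finv_pow f (k + t + 1) x)" for t
  define c where "c = q * negbin_weight k \<beta> n * (1 - \<beta>) ^ (k + 1) * u"
  have "0 \<le> \<beta> * (1 + real (m - 1) / real (L - m))"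
    using \<open>0 \<le> \<beta>\<close> by simp
  with q_ge have "0 \<le> q"
    by linarith
  have "0 \<le> u"
    using h_le[of undefined] by (meson abs_ge_zero order_trans)
  have k_le: "k \<le> m - 1" and n_pos: "0 < n"
    using assms unfolding n_def by auto
  have g_le: "\<bar>g (j + Suc n)\<bar> \<le> c * q ^ j" for j
  proof -
    have "g (j + Suc n)
        = negbin_weight k \<beta> (n + Suc j) * (1 - \<beta>) ^ (k + 1) * h (finv_pow f (k + (j + Suc n) + 1) x)"
      unfolding g_def by (simp add: add.commute)
    also have "\<bar>\<dots>\<bar> \<le> q ^ Suc j * negbin_weight k \<beta> n * (1 - \<beta>) ^ (k + 1) * u"
      by (rule negbin_term_tail_le[OF h_le assms(4,5) k_le n_pos q_ge[folded n_def]])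
    finally show ?thesis
      unfolding c_def by (simp add: mult_ac)
  qed
  have "zeta_k f h \<beta> k x = suminf g" and "ztilde_k f h \<beta> m L k x = (\<Sum>i<Suc n. g i)"
    unfolding zeta_k_def ztilde_k_def g_def negbin_weight_def n_def
    by (auto simp: atLeast0AtMost lessThan_Suc_atMost)
  have c_le: "c \<le> q * (real ((L - 1) choose (m - 1)) * \<beta> ^ n) * (1 - \<beta>) * u"
  proof -
    have "(1 - \<beta>) ^ (k + 1) \<le> 1 - \<beta>"
      using assms power_decreasing[of 1 "k + 1" "1 - \<beta>"] by simp
    moreover have "negbin_weight k \<beta> n \<le> real ((L - 1) choose (m - 1)) * \<beta> ^ n"
      using negbin_weight_le_choose[OF \<open>0 \<le> \<beta>\<close> k_le, of n] assms unfolding n_def by simp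
    moreover have "0 \<le> negbin_weight k \<beta> n"
      using \<open>0 \<le> \<beta>\<close> unfolding negbin_weight_def by simp
    ultimately show ?thesis
      unfolding c_def using assms \<open>0 \<le> q\<close> \<open>0 \<le> u\<close>
      by (intro mult_right_mono mult_mono mult_left_mono) auto
  qed
  have "\<bar>ztilde_k f h \<beta> m L k x - zeta_k f h \<beta> k x\<bar> = \<bar>suminf g - (\<Sum>i<Suc n. g i)\<bar>"
    unfolding zeta_k_def ztilde_k_def g_def negbin_weight_def n_def
    by (auto simp: abs_minus_commute atLeast0AtMost lessThan_Suc_atMost)
  also have "\<dots> \<le> c / (1 - q)"
    using g_le \<open>0 \<le> q\<close> \<open>q < 1\<close> by (rule suminf_tail_le_geometric)
  also have "\<dots> \<le> q * (real ((L - 1) choose (m - 1)) * \<beta> ^ n) * (1 - \<beta>) * u / (1 - q)"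
    using c_le \<open>q < 1\<close> by (intro divide_right_mono) auto
  finally show ?thesis
    unfolding n_def by (simp add: mult_ac)
qed

theorem lemma2:
  fixes f :: "'a \<Rightarrow> 'a" and h :: "'a \<Rightarrow> real" and m L :: nat and \<beta> :: real
  assumes "bij f"
    and "bounded (range h)"
    and "m \<ge> 1" and "L > m"
    and "0 < \<beta>" and "\<beta> < 1"
    and "\<beta> * (1 + real (m - 1) / real (L - m)) < 1"
  shows "\<forall>x. L2_set (\<lambda>k. ztilde_k f h \<beta> m L k x - zeta_k f h \<beta> k x) {..<m}
     \<le> real ((L - 1) choose (m - 1)) * sqrt (real m) * (SUP y. \<bar>h y\<bar>)
        * ((1 - \<beta>) / (1 - \<beta> * (1 + real (m - 1) / real (L - m))))
        * (\<beta> * (1 + real (m - 1) / real (L - m))) * \<beta> ^ (L - m)"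
proof
  fix x
  have "bdd_above (range (\<lambda>y. \<bar>h y\<bar>))"
    using assms(2) by (auto simp: bounded_iff intro: bdd_aboveI2)
  then have h_le: "\<bar>h y\<bar> \<le> (SUP y. \<bar>h y\<bar>)" for y
    by (rule cSUP_upper[rotated]) simp
  let ?\<beta>' = "\<beta> * (1 + real (m - 1) / real (L - m))"
  let ?C = "real ((L - 1) choose (m - 1)) * (SUP y. \<bar>h y\<bar>) * ((1 - \<beta>) / (1 - ?\<beta>')) * ?\<beta>' * \<beta> ^ (L - m)"
  have "\<bar>ztilde_k f h \<beta> m L k x - zeta_k f h \<beta> k x\<bar> \<le> ?C" if "k \<in> {..<m}" for k
    using that assms(4-7) by (intro ztilde_k_minus_zeta_k_bound[OF h_le]) auto
  then have "L2_set (\<lambda>k. ztilde_k f h \<beta> m L k x - zeta_k f h \<beta> k x) {..<m}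
      \<le> sqrt (real (card {..<m})) * ?C"
    by (rule L2_set_le_sqrt_card_mult)
  then show "L2_set (\<lambda>k. ztilde_k f h \<beta> m L k x - zeta_k f h \<beta> k x) {..<m}
     \<le> real ((L - 1) choose (m - 1)) * sqrt (real m) * (SUP y. \<bar>h y\<bar>) * ((1 - \<beta>) / (1 - ?\<beta>')) * ?\<beta>' * \<beta> ^ (L - m)"
    by (simp only: card_lessThan mult_ac)
qed

end
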